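(* Let $I_{RPC}=(V,E,T_f,c,p)$ be an RPCSTP instance and let $t_p,t_q,t_{\tilde p},t_{\tilde q}\in T_f$ (not necessarily distinct). Writing $R(t_a,t_b)$ for the feasible region of the LP relaxation of $PrizeRCut(I_{RPC},t_a,t_b)$, we have $$\mathrm{proj}_y\big(R(t_p,t_q)\big)=\mathrm{proj}_y\big(R(t_{\tilde p},t_{\tilde q})\big).$$
   Context: A rooted prize-collecting Steiner tree (RPCSTP) instance $(V,E,T_f,c,p)$ consists of a finite undirected connected graph $(V,E)$, $c:E\to\mathbb{Q}_{>0}$, $p:V\to\mathbb{Q}_{\ge0}$ and a nonempty set $T_f\subseteq V$ of fixed terminals (which must be contained in every feasible solution). Let $T_p:=\{v:p(v)>0\}$ and $T_p\setminus T_f=\{t_1,\dots,t_z\}$. Transformation 2 (RPCSTP to SAP), for $t_a,t_b\in T_f$: set $V':=V$, $A':=\{(v,w),(w,v):\{v,w\}\in E\}$ with $c'((v,w)):=c(\{v,w\})$; for each $i=1,\dots,z$ add a new vertex $t_i'$, an arc $(t_i,t_i')$ of cost $0$ and an arc $(t_a,t_i')$ of cost $p(t_i)$. Terminal set $T':=\{t_1',\dots,t_z'\}\cup T_f$, root $t_b$. The LP relaxation of $PrizeRCut(I_{RPC},t_a,t_b)$ has variables $x\in\mathbb{R}^{A'}$, $y\in\mathbb{R}^{E}$ and constraints: $x(\delta^-(U))\ge1$ for all $U\subset V'$ with $t_b\notin U$, $U\cap T'\neq\emptyset$ (where $\delta^-(U)$ is the set of arcs of $A'$ entering $U$ and $x(F)=\sum_{a\in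 F}x(a)$); $0\le x\le 1$; $y(\{v_i,v_j\})=x((v_i,v_j))+x((v_j,v_i))$ for all $\{v_i,v_j\}\in E$; $0\le y\le1$; objective $\min c'^Tx$. $\mathrm{proj}_y$ denotes projection onto the $y$-variables. *)

theory Defs
  imports Complex_Main
begin

definition rpcstp_instance ::
  "'v set \<Rightarrow> 'v set set \<Rightarrow> 'v set \<Rightarrow> ('v set \<Rightarrow> rat) \<Rightarrow> ('v \<Rightarrow> rat) \<Rightarrow> bool" where
  "rpcstp_instance V E Tf c p \<longleftrightarrow>
     finite V \<and>
     E \<subseteq> {{v, w} | v w. v \<in> V \<and> w \<in> V \<and> v \<noteq> w} \<and>
     (\<forall>v\<in>V. \<forall>w\<in>V. (v, w) \<in> {(a, b). {a, b} \<in> E}\<^sup>*) \<and>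
     (\<forall>e\<in>E. c e > 0) \<and>
     (\<forall>v\<in>V. p v \<ge> 0) \<and>
     Tf \<noteq> {} \<and> Tf \<subseteq> V"

definition prize_terminals :: "'v set \<Rightarrow> ('v \<Rightarrow> rat) \<Rightarrow> 'v set" where
  "prize_terminals V p = {v \<in> V. p v > 0}"

text \<open>Transformation 2: original vertices are Inl v, new vertices t_i' are Inr t_i.\<close>

definition sap_vertices :: "'v set \<Rightarrow> 'v set \<Rightarrow> ('v \<Rightarrow> rat) \<Rightarrow> ('v + 'v) set" where
  "sap_vertices V Tf p = Inl ` V \<union> Inr ` (prize_terminals V p - Tf)"

definition sap_arcs ::
  "'v set \<Rightarrow> 'v set set \<Rightarrow> 'v set \<Rightarrow> ('v \<Rightarrow> rat) \<Rightarrow> 'v \<Rightarrow> (('v + 'v) \<times> ('v + 'v)) set" where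
  "sap_arcs V E Tf p ta =
     {(Inl v, Inl w) | v w. {v, w} \<in> E}
     \<union> {(Inl t, Inr t) | t. t \<in> prize_terminals V p - Tf}
     \<union> {(Inl ta, Inr t) | t. t \<in> prize_terminals V p - Tf}"

definition sap_cost ::
  "('v set \<Rightarrow> rat) \<Rightarrow> ('v \<Rightarrow> rat) \<Rightarrow> 'v \<Rightarrow> ('v + 'v) \<times> ('v + 'v) \<Rightarrow> rat" where
  "sap_cost c p ta a = (case a of
       (Inl v, Inl w) \<Rightarrow> c {v, w}
     | (Inl s, Inr t) \<Rightarrow> (if s = t then 0 else p t)
     | _ \<Rightarrow> 0)"

definition sap_terminals :: "'v set \<Rightarrow> 'v set \<Rightarrow> ('v \<Rightarrow> rat) \<Rightarrow> ('v + 'v) set" where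
  "sap_terminals V Tf p = Inr ` (prize_terminals V p - Tf) \<union> Inl ` Tf"

definition delta_in :: "('a \<times> 'a) set \<Rightarrow> 'a set \<Rightarrow> ('a \<times> 'a) set" where
  "delta_in A U = {a \<in> A. fst a \<notin> U \<and> snd a \<in> U}"

text \<open>Feasible region of the LP relaxation of PrizeRCut(I, t_a, t_b); root is t_b.
  x lives on the arcs A' (zero outside), y on the edges E (zero outside).\<close>

definition prize_rcut_lp_region ::
  "'v set \<Rightarrow> 'v set set \<Rightarrow> 'v set \<Rightarrow> ('v \<Rightarrow> rat) \<Rightarrow> 'v \<Rightarrow> 'v
   \<Rightarrow> ((('v + 'v) \<times> ('v + 'v) \<Rightarrow> real) \<times> ('v set \<Rightarrow> real)) set" where
  "prize_rcut_lp_region V E Tf p ta tb =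
     {(x, y).
        (\<forall>U. U \<subset> sap_vertices V Tf p \<and> Inl tb \<notin> U \<and> U \<inter> sap_terminals V Tf p \<noteq> {}
              \<longrightarrow> (\<Sum>a\<in>delta_in (sap_arcs V E Tf p ta) U. x a) \<ge> 1) \<and>
        (\<forall>a\<in>sap_arcs V E Tf p ta. 0 \<le> x a \<and> x a \<le> 1) \<and>
        (\<forall>a. a \<notin> sap_arcs V E Tf p ta \<longrightarrow> x a = 0) \<and>
        (\<forall>v w. {v, w} \<in> E \<longrightarrow> y {v, w} = x (Inl v, Inl w) + x (Inl w, Inl v)) \<and>
        (\<forall>e\<in>E. 0 \<le> y e \<and> y e \<le> 1) \<and>
        (\<forall>e. e \<notin> E \<longrightarrow> y e = 0)}"

definition proj_y :: "('a \<times> 'b) set \<Rightarrow> 'b set" where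
  "proj_y R = snd ` R"

end

theory Submission
  imports Defs "HOL-Analysis.Analysis"
begin

text \<open>
  Let (x, y) be feasible for the roots t_a, t_b. The values of x on the arcs of the original
  graph form capacities z in which every set of vertices containing a fixed terminal but not t_b
  has in-capacity at least 1. To move the root to t_b', subtract from z a unit flow from t_b to
  t_b' below z (max-flow min-cut, in the one direction needed): the in-capacity of a set W not
  containing t_b' changes by [t_b \<in> W], and z(u,v) + z(v,u), hence y, is unchanged. Finally
  give every arc entering a new vertex t_i' the value 1; this pays for the cuts containing no
  fixed terminal, whichever t_a' is used.
\<close>

section \<open>Flows and cuts\<close>

definition skew_symmetric :: "('v \<times> 'v \<Rightarrow> real) \<Rightarrow> bool" where
  "skew_symmetric g \<longleftrightarrow> (\<forall>u v. g (u, v) = - g (v, u))"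

definition inflow :: "'v set \<Rightarrow> ('v \<times> 'v \<Rightarrow> real) \<Rightarrow> 'v \<Rightarrow> real" where
  "inflow V g v = (\<Sum>u\<in>V. g (u, v))"

definition cut_in :: "'v set \<Rightarrow> ('v \<times> 'v \<Rightarrow> real) \<Rightarrow> 'v set \<Rightarrow> real" where
  "cut_in V x W = (\<Sum>u\<in>V - W. \<Sum>v\<in>W. x (u, v))"

text \<open>Flows are net flows: g (u, v) = - g (v, u), so a bound g \<le> x constrains both directions.\<close>

definition st_flow :: "'v set \<Rightarrow> ('v \<times> 'v \<Rightarrow> real) \<Rightarrow> 'v \<Rightarrow> 'v \<Rightarrow> real \<Rightarrow> bool" where
  "st_flow V g s t r \<longleftrightarrow> skew_symmetric g \<and>
     (\<forall>w\<in>V. inflow V g w = r * ((if w = t then 1 else 0) - (if w = s then 1 else 0)))"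

lemma skew_symmetricD: "skew_symmetric g \<Longrightarrow> g (u, v) = - g (v, u)"
  unfolding skew_symmetric_def by blast

lemma skew_symmetric_sum_sum_eq_0:
  assumes "skew_symmetric g"
  shows "(\<Sum>u\<in>W. \<Sum>v\<in>W. g (u, v)) = 0"
proof -
  have "(\<Sum>u\<in>W. \<Sum>v\<in>W. g (u, v)) = (\<Sum>v\<in>W. \<Sum>u\<in>W. g (u, v))"
    by (rule sum.swap)
  also have "\<dots> = (\<Sum>v\<in>W. \<Sum>u\<in>W. - g (v, u))"
    by (intro sum.cong refl skew_symmetricD[OF assms])
  also have "\<dots> = - (\<Sum>v\<in>W. \<Sum>u\<in>W. g (v, u))"
    by (simp add: sum_negf)
  finally show ?thesis by simp
qed

lemma cut_in_eq_sum_inflow: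
  assumes "finite V" "W \<subseteq> V" "skew_symmetric g"
  shows "cut_in V g W = (\<Sum>v\<in>W. inflow V g v)"
proof -
  have "(\<Sum>v\<in>W. inflow V g v) = (\<Sum>v\<in>W. (\<Sum>u\<in>V - W. g (u, v)) + (\<Sum>u\<in>W. g (u, v)))"
    unfolding inflow_def by (intro sum.cong refl sum.subset_diff[OF assms(2,1)])
  also have "\<dots> = (\<Sum>v\<in>W. \<Sum>u\<in>V - W. g (u, v)) + (\<Sum>v\<in>W. \<Sum>u\<in>W. g (u, v))"
    by (rule sum.distrib)
  also have "(\<Sum>v\<in>W. \<Sum>u\<in>W. g (u, v)) = (\<Sum>u\<in>W. \<Sum>v\<in>W. g (u, v))"
    by (rule sum.swap)
  also have "\<dots> = 0"
    by (rule skew_symmetric_sum_sum_eq_0[OF assms(3)])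
  also have "(\<Sum>v\<in>W. \<Sum>u\<in>V - W. g (u, v)) = cut_in V g W"
    unfolding cut_in_def by (rule sum.swap)
  finally show ?thesis by simp
qed

lemma sum_inflow_eq_0:
  assumes "finite V" "skew_symmetric g"
  shows "(\<Sum>w\<in>V. inflow V g w) = 0"
  using cut_in_eq_sum_inflow[OF assms(1) order_refl assms(2)] by (simp add: cut_in_def)

lemma skew_symmetric_add:
  "skew_symmetric g \<Longrightarrow> skew_symmetric h \<Longrightarrow> skew_symmetric (\<lambda>q. g q + h q)"
  unfolding skew_symmetric_def by (metis minus_add_distrib)

lemma inflow_add: "inflow V (\<lambda>q. g q + h q) w = inflow V g w + inflow V h w"
  unfolding inflow_def by (rule sum.distrib)

lemma st_flow_trans:
  assumes g: "st_flow V g a c r" and h: "st_flow V h c b r"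
  shows "st_flow V (\<lambda>q. g q + h q) a b r"
proof -
  have "inflow V g w + inflow V h w
      = r * ((if w = b then 1 else 0) - (if w = a then 1 else 0))" if "w \<in> V" for w
  proof -
    have "inflow V g w = r * ((if w = c then 1 else 0) - (if w = a then 1 else 0))"
      and "inflow V h w = r * ((if w = b then 1 else 0) - (if w = c then 1 else 0))"
      using g h that unfolding st_flow_def by auto
    then show ?thesis by (simp only: right_diff_distrib)
  qed
  then show ?thesis
    using g h unfolding st_flow_def by (simp add: skew_symmetric_add inflow_add)
qed

lemma st_flow_add:
  assumes "st_flow V g s t r" "st_flow V h s t r'"
  shows "st_flow V (\<lambda>q. g q + h q) s t (r + r')"
  using assms unfolding st_flow_def by (simp add: skew_symmetric_add inflow_add distrib_right)

lemma st_flow_cut_in: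
  assumes "finite V" "W \<subseteq> V" "st_flow V g s t r"
  shows "cut_in V g W = r * ((if t \<in> W then 1 else 0) - (if s \<in> W then 1 else 0))"
proof -
  have "cut_in V g W = (\<Sum>w\<in>W. r * ((if w = t then 1 else 0) - (if w = s then 1 else 0)))"
    using assms cut_in_eq_sum_inflow[OF assms(1,2)] unfolding st_flow_def
    by (auto intro: sum.cong)
  also have "\<dots> = r * ((if t \<in> W then 1 else 0) - (if s \<in> W then 1 else 0))"
    using finite_subset[OF assms(2,1)]
    by (simp add: sum_distrib_left[symmetric] sum_subtractf)
  finally show ?thesis .
qed

definition arc_flow :: "'v \<Rightarrow> 'v \<Rightarrow> real \<Rightarrow> 'v \<times> 'v \<Rightarrow> real" where
  "arc_flow c b r q = (if q = (c, b) then r else 0) - (if q = (b, c) then r else 0)"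

lemma st_flow_arc_flow:
  assumes "finite V" "c \<in> V" "b \<in> V"
  shows "st_flow V (arc_flow c b r) c b r"
  using assms unfolding st_flow_def skew_symmetric_def inflow_def arc_flow_def
  by (auto simp: sum_subtractf sum.delta' algebra_simps)

lemma arc_flow_le: "0 \<le> r \<Longrightarrow> arc_flow c b r q \<le> r"
  unfolding arc_flow_def by argo

lemma arc_flow_pos: "0 \<le> r \<Longrightarrow> 0 < arc_flow c b r q \<Longrightarrow> q = (c, b)"
  unfolding arc_flow_def by (auto split: if_splits)

lemma st_flow_of_conservation:
  assumes "finite V" "s \<in> V" "t \<in> V" "s \<noteq> t" "skew_symmetric g"
    and "\<forall>w\<in>V - {s, t}. inflow V g w = 0"
  shows "st_flow V g s t (inflow V g t)"
proof -
  have "0 = (\<Sum>w\<in>V. inflow V g w)"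
    using sum_inflow_eq_0[OF assms(1,5)] by simp
  also have "\<dots> = inflow V g s + inflow V g t + (\<Sum>w\<in>V - {s, t}. inflow V g w)"
    using assms(1-4) by (simp add: sum.remove Diff_insert2[of V s "{t}"])
  finally have "inflow V g s = - inflow V g t"
    using assms(6) by simp
  then show ?thesis
    using assms(4-6) unfolding st_flow_def by auto
qed

text \<open>A walk may repeat arcs, hence the bound n * r.\<close>

lemma st_flow_along_path:
  assumes "finite V" "R \<subseteq> V \<times> V" "0 \<le> r" "(a, b) \<in> R ^^ n" "a \<in> V"
  shows "\<exists>h. st_flow V h a b r \<and> (\<forall>q. h q \<le> real n * r) \<and> (\<forall>q. 0 < h q \<longrightarrow> q \<in> R)"
  using assms(4)
proof (induction n arbitrary: b)
  case 0
  then show ?case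
    by (intro exI[of _ "\<lambda>q. 0"]) (simp add: st_flow_def skew_symmetric_def inflow_def)
next
  case (Suc n)
  then obtain c where ac: "(a, c) \<in> R ^^ n" and cb: "(c, b) \<in> R"
    by auto
  obtain h where h: "st_flow V h a c r" "\<forall>q. h q \<le> real n * r" "\<forall>q. 0 < h q \<longrightarrow> q \<in> R"
    using Suc.IH[OF ac] by blast
  have "st_flow V (arc_flow c b r) c b r"
    using cb assms(1,2) by (intro st_flow_arc_flow) auto
  then have "st_flow V (\<lambda>q. h q + arc_flow c b r q) a b r"
    by (rule st_flow_trans[OF h(1)])
  moreover have "h q + arc_flow c b r q \<le> real (Suc n) * r" for q
    using h(2)[rule_format, of q] arc_flow_le[OF assms(3), of c b q] by (simp add: distrib_right)
  moreover have "q \<in> R" if "0 < h q + arc_flow c b r q" for q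
  proof (cases "0 < h q")
    case False
    then show ?thesis
      using that arc_flow_pos[OF assms(3), of c b q] cb by force
  qed (use h(3) in blast)
  ultimately show ?case by blast
qed

definition bounded_flows :: "'v set \<Rightarrow> ('v \<times> 'v \<Rightarrow> real) \<Rightarrow> 'v set \<Rightarrow> ('v \<times> 'v \<Rightarrow> real) set" where
  "bounded_flows V x C = {g. skew_symmetric g \<and> (\<forall>q. g q \<le> x q) \<and> (\<forall>w\<in>C. inflow V g w = 0)}"

lemma compact_bounded_flows: "compact (bounded_flows V x C)"
proof -
  define B where "B = {g. \<forall>q. - x (snd q, fst q) \<le> g q \<and> g q \<le> x q}"
  have "B = PiE UNIV (\<lambda>q. {- x (snd q, fst q)..x q})"
    by (auto simp: B_def PiE_def extensional_def Pi_def)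
  then have "compact B"
    using compactin_PiE[of "\<lambda>_. euclidean" UNIV "\<lambda>q. {- x (snd q, fst q)..x q}"]
    by (simp add: euclidean_product_topology)
  moreover have "closed (bounded_flows V x C)"
  proof -
    have "bounded_flows V x C = (\<Inter>u. \<Inter>v. {g. g (u, v) = - g (v, u)})
        \<inter> (\<Inter>q. {g. g q \<le> x q}) \<inter> (\<Inter>w\<in>C. {g. inflow V g w = 0})"
      unfolding bounded_flows_def skew_symmetric_def by blast
    then show ?thesis
      by (simp add: closed_Int closed_INT closed_Collect_eq closed_Collect_le inflow_def
          continuous_on_sum continuous_on_minus)
  qed
  moreover have "bounded_flows V x C \<subseteq> B"
  proof
    fix g assume "g \<in> bounded_flows V x C"
    then have skew: "skew_symmetric g" and le: "\<forall>q. g q \<le> x q"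
      unfolding bounded_flows_def by auto
    show "g \<in> B"
      unfolding B_def
    proof (intro CollectI allI conjI)
      fix q
      have "g (snd q, fst q) \<le> x (snd q, fst q)"
        using le by blast
      moreover have "g q = - g (snd q, fst q)"
        using skew_symmetricD[OF skew, of "fst q" "snd q"] by simp
      ultimately show "- x (snd q, fst q) \<le> g q"
        by linarith
    qed (use le in blast)
  qed
  ultimately show ?thesis
    by (metis compact_Int_closed inf.absorb_iff2)
qed

lemma st_flow_in_bounded_flows:
  assumes "st_flow V g s t r" "\<forall>q. g q \<le> x q"
  shows "g \<in> bounded_flows V x (V - {s, t})"
  using assms unfolding st_flow_def bounded_flows_def by auto

lemma maximum_flow_has_no_augmenting_path:
  assumes fin: "finite V" and "s \<in> V" "t \<in> V" "s \<noteq> t"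
    and g: "g \<in> bounded_flows V x (V - {s, t})"
    and max: "\<forall>g'\<in>bounded_flows V x (V - {s, t}). inflow V g' t \<le> inflow V g t"
  shows "(s, t) \<notin> {(u, v). u \<in> V \<and> v \<in> V \<and> g (u, v) < x (u, v)}\<^sup>*"
proof
  define R where "R = {(u, v). u \<in> V \<and> v \<in> V \<and> g (u, v) < x (u, v)}"
  assume "(s, t) \<in> R\<^sup>*"
  then obtain n where path: "(s, t) \<in> R ^^ n"
    using rtrancl_power by blast
  have "R \<noteq> {}"
    using path \<open>s \<noteq> t\<close> by (cases n) auto
  moreover have "finite R"
    using fin by (intro finite_subset[of R "V \<times> V"]) (auto simp: R_def)
  moreover define m where "m = Min ((\<lambda>q. x q - g q) ` R)"
  ultimately have "0 < m" and slack: "\<forall>q\<in>R. m \<le> x q - g q"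
    by (auto simp: R_def)
  define \<epsilon> where "\<epsilon> = m / (real n + 1)"
  have "0 < \<epsilon>" "real n * \<epsilon> < m"
    using \<open>0 < m\<close> by (auto simp: \<epsilon>_def field_simps)
  have "R \<subseteq> V \<times> V"
    by (auto simp: R_def)
  then obtain h where h: "st_flow V h s t \<epsilon>" "\<forall>q. h q \<le> real n * \<epsilon>" "\<forall>q. 0 < h q \<longrightarrow> q \<in> R"
    using st_flow_along_path[OF fin _ _ path \<open>s \<in> V\<close>] \<open>0 < \<epsilon>\<close> by (meson less_imp_le)
  have "st_flow V g s t (inflow V g t)"
    using g assms(2-4) fin by (intro st_flow_of_conservation) (auto simp: bounded_flows_def)
  then have augmented: "st_flow V (\<lambda>q. g q + h q) s t (inflow V g t + \<epsilon>)"
    by (rule st_flow_add[OF _ h(1)])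
  moreover have "g q + h q \<le> x q" for q
  proof (cases "0 < h q")
    case True
    then have "m \<le> x q - g q"
      using h(3) slack by blast
    then show ?thesis
      using h(2)[rule_format, of q] \<open>real n * \<epsilon> < m\<close> by linarith
  next
    case False
    moreover have "g q \<le> x q"
      using g unfolding bounded_flows_def by blast
    ultimately show ?thesis
      by linarith
  qed
  ultimately have "(\<lambda>q. g q + h q) \<in> bounded_flows V x (V - {s, t})"
    by (intro st_flow_in_bounded_flows) auto
  moreover have "inflow V (\<lambda>q. g q + h q) t = inflow V g t + \<epsilon>"
    using augmented \<open>t \<in> V\<close> \<open>s \<noteq> t\<close> unfolding st_flow_def by auto
  ultimately show False
    using max \<open>0 < \<epsilon>\<close> by fastforce
qed

lemma st_flow_scale:
  assumes "st_flow V g s t r"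
  shows "st_flow V (\<lambda>q. k * g q) s t (k * r)"
proof -
  have "skew_symmetric (\<lambda>q. k * g q)"
    using assms unfolding st_flow_def skew_symmetric_def by (metis mult_minus_right)
  moreover have "inflow V (\<lambda>q. k * g q) w = k * inflow V g w" for w
    unfolding inflow_def by (rule sum_distrib_left[symmetric])
  ultimately show ?thesis
    using assms unfolding st_flow_def by (simp add: mult.assoc)
qed

lemma st_flow_normalize:
  assumes "st_flow V g s t r" "1 \<le> r" "\<And>q. g q \<le> x q" "\<And>q. 0 \<le> x q"
  shows "st_flow V (\<lambda>q. g q / r) s t 1 \<and> (\<forall>q. g q / r \<le> x q)"
proof (intro conjI allI)
  show "st_flow V (\<lambda>q. g q / r) s t 1"
    using st_flow_scale[OF assms(1), of "1 / r"] assms(2) by simp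
  show "g q / r \<le> x q" for q
  proof (cases "0 \<le> g q")
    case True
    then have "g q / r \<le> g q"
      using assms(2) mult_left_mono[OF assms(2) True] by (simp add: divide_le_eq)
    then show ?thesis
      using assms(3)[of q] by linarith
  next
    case False
    then show ?thesis
      using assms(2) assms(4)[of q] by (simp add: divide_nonpos_pos order.trans[OF _ assms(4)[of q]])
  qed
qed

text \<open>
  A flow maximizing the inflow at t exists by compactness. It has no augmenting path, so the
  vertices reachable from s in the residual graph bound a saturated cut, whence the maximum is
  at least 1.
\<close>

lemma unit_flow_below_capacities:
  assumes fin: "finite V" and nonneg: "\<And>q. 0 \<le> x q" and "s \<in> V" "t \<in> V" "s \<noteq> t"
    and cut: "\<And>W. W \<subseteq> V \<Longrightarrow> s \<notin> W \<Longrightarrow> t \<in> W \<Longrightarrow> 1 \<le> cut_in V x W"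
  shows "\<exists>g. st_flow V g s t 1 \<and> (\<forall>q. g q \<le> x q)"
proof -
  let ?F = "bounded_flows V x (V - {s, t})"
  have "(\<lambda>q. 0) \<in> ?F"
    using nonneg by (simp add: bounded_flows_def skew_symmetric_def inflow_def)
  moreover have "continuous_on ?F (\<lambda>g. inflow V g t)"
    unfolding inflow_def
    by (rule continuous_on_sum, rule continuous_on_subset[OF continuous_on_product_coordinates subset_UNIV])
  ultimately obtain g where g: "g \<in> ?F" and max: "\<forall>g'\<in>?F. inflow V g' t \<le> inflow V g t"
    using continuous_attains_sup[OF compact_bounded_flows] by blast
  have le: "g q \<le> x q" for q
    using g unfolding bounded_flows_def by blast
  have flow: "st_flow V g s t (inflow V g t)"
    using g assms(3-5) fin by (intro st_flow_of_conservation) (auto simp: bounded_flows_def)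
  define S where "S = {w \<in> V. (s, w) \<in> {(u, v). u \<in> V \<and> v \<in> V \<and> g (u, v) < x (u, v)}\<^sup>*}"
  have saturated: "x (u, v) \<le> g (u, v)" if "u \<in> S" "v \<in> V - S" for u v
    using that rtrancl_into_rtrancl[of s u _ v] by (force simp: S_def)
  have "t \<notin> S"
    using maximum_flow_has_no_augmenting_path[OF fin assms(3-5) g max] by (simp add: S_def)
  then have W: "V - S \<subseteq> V" "s \<notin> V - S" "t \<in> V - S"
    using assms(3,4) by (auto simp: S_def)
  have "V - (V - S) = S"
    by (auto simp: S_def)
  then have "cut_in V x (V - S) \<le> cut_in V g (V - S)"
    unfolding cut_in_def using saturated by (auto intro!: sum_mono)
  also have "\<dots> = inflow V g t"
    using st_flow_cut_in[OF fin W(1) flow] W by auto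
  finally have flow_value: "1 \<le> inflow V g t"
    using cut[OF W] by linarith
  then show ?thesis
    using st_flow_normalize[OF flow _ le nonneg] by blast
qed

lemma reroot_cut_condition:
  assumes fin: "finite V" and nonneg: "\<And>q. 0 \<le> x q" and "s \<in> V" "t \<in> T" "T \<subseteq> V"
    and cut: "\<And>W. W \<subseteq> V \<Longrightarrow> s \<notin> W \<Longrightarrow> W \<inter> T \<noteq> {} \<Longrightarrow> 1 \<le> cut_in V x W"
  obtains x' where "\<And>q. 0 \<le> x' q" "\<And>u v. x' (u, v) + x' (v, u) = x (u, v) + x (v, u)"
    "\<And>W. W \<subseteq> V \<Longrightarrow> t \<notin> W \<Longrightarrow> W \<inter> T \<noteq> {} \<Longrightarrow> 1 \<le> cut_in V x' W"
proof (cases "s = t")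
  case True
  then show ?thesis
    using that nonneg cut by blast
next
  case False
  have "t \<in> V"
    using assms(4,5) by blast
  have st_cut: "1 \<le> cut_in V x W" if "W \<subseteq> V" "s \<notin> W" "t \<in> W" for W
    using cut that \<open>t \<in> T\<close> by blast
  obtain g where g: "st_flow V g s t 1" "\<forall>q. g q \<le> x q"
    using unit_flow_below_capacities[OF fin nonneg \<open>s \<in> V\<close> \<open>t \<in> V\<close> False st_cut] by blast
  show ?thesis
  proof
    show "0 \<le> x q - g q" for q
      using g(2)[rule_format, of q] by simp
    show "(x (u, v) - g (u, v)) + (x (v, u) - g (v, u)) = x (u, v) + x (v, u)" for u v
      using skew_symmetricD[of g u v] g(1) unfolding st_flow_def by simp
    show "1 \<le> cut_in V (\<lambda>q. x q - g q) W"
      if "W \<subseteq> V" "t \<notin> W" "W \<inter> T \<noteq> {}" for W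
    proof -
      have "cut_in V (\<lambda>q. x q - g q) W = cut_in V x W + (if s \<in> W then 1 else 0)"
        using st_flow_cut_in[OF fin \<open>W \<subseteq> V\<close> g(1)] \<open>t \<notin> W\<close>
        by (simp add: cut_in_def sum_subtractf)
      moreover have "0 \<le> cut_in V x W"
        unfolding cut_in_def by (intro sum_nonneg nonneg)
      ultimately show ?thesis
        using cut[OF \<open>W \<subseteq> V\<close> _ \<open>W \<inter> T \<noteq> {}\<close>] by (cases "s \<in> W") auto
    qed
  qed
qed

section \<open>The cut relaxation of the prize-collecting problem\<close>

lemma Inl_Inl_in_sap_arcs_iff [simp]:
  "(Inl u, Inl v) \<in> sap_arcs V E Tf p ta \<longleftrightarrow> {u, v} \<in> E"
  unfolding sap_arcs_def by auto

lemma Inl_Inr_in_sap_arcs_iff [simp]: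
  "(Inl u, Inr t) \<in> sap_arcs V E Tf p ta \<longleftrightarrow> t \<in> prize_terminals V p - Tf \<and> (u = t \<or> u = ta)"
  unfolding sap_arcs_def by auto

lemma sap_arc_cases:
  assumes "a \<in> sap_arcs V E Tf p ta"
  obtains u v where "a = (Inl u, Inl v)" "{u, v} \<in> E"
    | u t where "a = (Inl u, Inr t)" "t \<in> prize_terminals V p - Tf" "u = t \<or> u = ta"
  using assms unfolding sap_arcs_def by auto

lemma edge_endpoints_in_vertices:
  assumes "E \<subseteq> {{v, w} | v w. v \<in> V \<and> w \<in> V \<and> v \<noteq> w}" "{u, v} \<in> E"
  shows "u \<in> V" "v \<in> V"
  using assms by (auto simp: doubleton_eq_iff)

lemma sum_delta_in_Inl_image:
  fixes x :: "('v + 'v) \<times> ('v + 'v) \<Rightarrow> real"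
  assumes E: "E \<subseteq> {{v, w} | v w. v \<in> V \<and> w \<in> V \<and> v \<noteq> w}"
    and "finite V" "W \<subseteq> V" and x: "\<forall>a. a \<notin> sap_arcs V E Tf p ta \<longrightarrow> x a = 0"
  shows "(\<Sum>a\<in>delta_in (sap_arcs V E Tf p ta) (Inl ` W). x a)
    = cut_in V (\<lambda>(u, v). x (Inl u, Inl v)) W"
proof -
  let ?f = "\<lambda>(u, v). (Inl u, Inl v) :: ('v + 'v) \<times> ('v + 'v)"
  let ?\<delta> = "delta_in (sap_arcs V E Tf p ta) (Inl ` W)"
  have "inj ?f"
    by (auto simp: inj_def)
  have "cut_in V (\<lambda>(u, v). x (Inl u, Inl v)) W = (\<Sum>q\<in>(V - W) \<times> W. x (?f q))"
    unfolding cut_in_def sum.cartesian_product by (simp add: case_prod_beta)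
  also have "\<dots> = (\<Sum>a\<in>?f ` ((V - W) \<times> W). x a)"
    by (simp add: sum.reindex[OF inj_on_subset[OF \<open>inj ?f\<close> subset_UNIV]])
  also have "\<dots> = (\<Sum>a\<in>?\<delta>. x a)"
  proof (rule sum.mono_neutral_right)
    show "finite (?f ` ((V - W) \<times> W))"
      using assms(2,3) finite_subset by blast
    show "?\<delta> \<subseteq> ?f ` ((V - W) \<times> W)"
    proof
      fix a assume "a \<in> ?\<delta>"
      then have "a \<in> sap_arcs V E Tf p ta" "snd a \<in> Inl ` W" "fst a \<notin> Inl ` W"
        by (auto simp: delta_in_def)
      then show "a \<in> ?f ` ((V - W) \<times> W)"
        using edge_endpoints_in_vertices[OF E] by (cases rule: sap_arc_cases) force+
    qed
    show "\<forall>a\<in>?f ` ((V - W) \<times> W) - ?\<delta>. x a = 0"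
      using x by (auto simp: delta_in_def)
  qed
  finally show ?thesis ..
qed

lemma finite_sap_arcs:
  assumes "rpcstp_instance V E Tf c p"
  shows "finite (sap_arcs V E Tf p ta)"
proof -
  let ?B = "Inl ` insert ta V \<union> Inr ` V"
  have E: "E \<subseteq> {{v, w} | v w. v \<in> V \<and> w \<in> V \<and> v \<noteq> w}" and "finite V"
    using assms unfolding rpcstp_instance_def by auto
  have "sap_arcs V E Tf p ta \<subseteq> ?B \<times> ?B"
  proof
    fix a assume "a \<in> sap_arcs V E Tf p ta"
    then show "a \<in> ?B \<times> ?B"
      using edge_endpoints_in_vertices[OF E]
      by (cases rule: sap_arc_cases) (auto simp: prize_terminals_def)
  qed
  then show ?thesis
    using \<open>finite V\<close> finite_subset by blast
qed

lemma prize_rcut_lp_region_edge_cut: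
  assumes inst: "rpcstp_instance V E Tf c p" and "tb \<in> V"
    and xy: "(x, y) \<in> prize_rcut_lp_region V E Tf p ta tb"
    and W: "W \<subseteq> V" "tb \<notin> W" "W \<inter> Tf \<noteq> {}"
  shows "1 \<le> cut_in V (\<lambda>(u, v). x (Inl u, Inl v)) W"
proof -
  have E: "E \<subseteq> {{v, w} | v w. v \<in> V \<and> w \<in> V \<and> v \<noteq> w}" and "finite V"
    using inst unfolding rpcstp_instance_def by auto
  have cuts: "\<forall>U. U \<subset> sap_vertices V Tf p \<and> Inl tb \<notin> U \<and> U \<inter> sap_terminals V Tf p \<noteq> {}
      \<longrightarrow> 1 \<le> (\<Sum>a\<in>delta_in (sap_arcs V E Tf p ta) U. x a)"
    and zero: "\<forall>a. a \<notin> sap_arcs V E Tf p ta \<longrightarrow> x a = 0"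
    using xy unfolding prize_rcut_lp_region_def by auto
  have "Inl ` W \<subset> sap_vertices V Tf p"
    using W \<open>tb \<in> V\<close> unfolding sap_vertices_def by blast
  moreover have "Inl ` W \<inter> sap_terminals V Tf p \<noteq> {}"
    using W(3) unfolding sap_terminals_def by blast
  ultimately have "1 \<le> (\<Sum>a\<in>delta_in (sap_arcs V E Tf p ta) (Inl ` W). x a)"
    using cuts W(2) by blast
  then show ?thesis
    using sum_delta_in_Inl_image[OF E \<open>finite V\<close> W(1) zero] by simp
qed

text \<open>
  Arcs entering a new vertex t_i' get value 1: y does not see them, and they cover the cuts
  that contain no fixed terminal.
\<close>

definition sap_lift ::
  "'v set \<Rightarrow> 'v set set \<Rightarrow> 'v set \<Rightarrow> ('v \<Rightarrow> rat) \<Rightarrow> 'v \<Rightarrow> ('v \<times> 'v \<Rightarrow> real)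
   \<Rightarrow> ('v + 'v) \<times> ('v + 'v) \<Rightarrow> real" where
  "sap_lift V E Tf p ta z a =
     (if a \<in> sap_arcs V E Tf p ta then (case a of (Inl u, Inl v) \<Rightarrow> z (u, v) | _ \<Rightarrow> 1) else 0)"

lemma sap_lift_Inl_Inl:
  "(\<And>u v. {u, v} \<notin> E \<Longrightarrow> z (u, v) = 0) \<Longrightarrow> sap_lift V E Tf p ta z (Inl u, Inl v) = z (u, v)"
  unfolding sap_lift_def by auto

lemma sap_lift_nonneg: "(\<And>q. 0 \<le> z q) \<Longrightarrow> 0 \<le> sap_lift V E Tf p ta z a"
  unfolding sap_lift_def by (auto split: prod.split sum.split)

lemma sum_delta_in_sap_lift_ge_1:
  fixes z :: "'v \<times> 'v \<Rightarrow> real"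
  assumes inst: "rpcstp_instance V E Tf c p" and "ta \<in> Tf"
    and z: "\<And>q. 0 \<le> z q" "\<And>u v. {u, v} \<notin> E \<Longrightarrow> z (u, v) = 0"
    and cut: "\<And>W. W \<subseteq> V \<Longrightarrow> tb \<notin> W \<Longrightarrow> W \<inter> Tf \<noteq> {} \<Longrightarrow> 1 \<le> cut_in V z W"
    and U: "U \<subseteq> sap_vertices V Tf p" "Inl tb \<notin> U" "U \<inter> sap_terminals V Tf p \<noteq> {}"
  shows "1 \<le> (\<Sum>a\<in>delta_in (sap_arcs V E Tf p ta) U. sap_lift V E Tf p ta z a)"
proof -
  let ?A = "sap_arcs V E Tf p ta" and ?x = "sap_lift V E Tf p ta z"
  define W where "W = {v. Inl v \<in> U}"
  have E: "E \<subseteq> {{v, w} | v w. v \<in> V \<and> w \<in> V \<and> v \<noteq> w}" and "finite V"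
    using inst unfolding rpcstp_instance_def by auto
  have "W \<subseteq> V"
    using U(1) unfolding W_def sap_vertices_def by blast
  have "finite (delta_in ?A U)"
    using finite_sap_arcs[OF inst] unfolding delta_in_def by simp
  show ?thesis
  proof (cases "W \<inter> Tf = {}")
    case False
    have "1 \<le> cut_in V z W"
      using cut[OF \<open>W \<subseteq> V\<close> _ False] U(2) unfolding W_def by blast
    also have "\<dots> = cut_in V (\<lambda>(u, v). ?x (Inl u, Inl v)) W"
      by (simp add: sap_lift_Inl_Inl[of E z, OF z(2)] cut_in_def)
    also have "\<dots> = (\<Sum>a\<in>delta_in ?A (Inl ` W). ?x a)"
      by (rule sum_delta_in_Inl_image[OF E \<open>finite V\<close> \<open>W \<subseteq> V\<close>, symmetric])
        (simp add: sap_lift_def)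
    also have "\<dots> \<le> (\<Sum>a\<in>delta_in ?A U. ?x a)"
    proof (rule sum_mono2[OF \<open>finite (delta_in ?A U)\<close>])
      show "delta_in ?A (Inl ` W) \<subseteq> delta_in ?A U"
        unfolding delta_in_def W_def
        by (force elim: sap_arc_cases)
    qed (rule sap_lift_nonneg[OF z(1)])
    finally show ?thesis .
  next
    case True
    obtain t where "Inr t \<in> U" "t \<in> prize_terminals V p - Tf"
      using U(3) True unfolding sap_terminals_def W_def by blast
    have "Inl ta \<notin> U"
      using True \<open>ta \<in> Tf\<close> unfolding W_def by blast
    define a :: "('v + 'v) \<times> ('v + 'v)"
      where "a = (if Inl t \<in> U then (Inl ta, Inr t) else (Inl t, Inr t))"
    have a: "a \<in> delta_in ?A U"
      using \<open>Inr t \<in> U\<close> \<open>t \<in> _\<close> \<open>Inl ta \<notin> U\<close> unfolding a_def delta_in_def by auto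
    have "1 = ?x a"
      using \<open>t \<in> _\<close> unfolding a_def sap_lift_def by auto
    also have "\<dots> \<le> (\<Sum>a\<in>delta_in ?A U. ?x a)"
      by (rule member_le_sum[OF a sap_lift_nonneg[OF z(1)] \<open>finite (delta_in ?A U)\<close>])
    finally show ?thesis .
  qed
qed

lemma sap_lift_in_prize_rcut_lp_region:
  fixes z :: "'v \<times> 'v \<Rightarrow> real"
  assumes inst: "rpcstp_instance V E Tf c p" and "ta \<in> Tf"
    and z: "\<And>q. 0 \<le> z q" "\<And>u v. {u, v} \<notin> E \<Longrightarrow> z (u, v) = 0"
    and cut: "\<And>W. W \<subseteq> V \<Longrightarrow> tb \<notin> W \<Longrightarrow> W \<inter> Tf \<noteq> {} \<Longrightarrow> 1 \<le> cut_in V z W"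
    and y: "\<And>u v. {u, v} \<in> E \<Longrightarrow> y {u, v} = z (u, v) + z (v, u)"
      "\<forall>e\<in>E. 0 \<le> y e \<and> y e \<le> 1" "\<forall>e. e \<notin> E \<longrightarrow> y e = 0"
  shows "(sap_lift V E Tf p ta z, y) \<in> prize_rcut_lp_region V E Tf p ta tb"
proof -
  let ?A = "sap_arcs V E Tf p ta" and ?x = "sap_lift V E Tf p ta z"
  have edge: "?x (Inl u, Inl v) = z (u, v)" for u v
    by (rule sap_lift_Inl_Inl[of E z, OF z(2)])
  have bounded: "0 \<le> ?x a \<and> ?x a \<le> 1" if "a \<in> ?A" for a
    using that
  proof (cases rule: sap_arc_cases)
    case (1 u v)
    then have "z (u, v) \<le> y {u, v}"
      using y(1) z(1)[of "(v, u)"] by simp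
    moreover have "y {u, v} \<le> 1"
      using y(2) 1(2) by blast
    ultimately show ?thesis
      using 1(1) edge z(1)[of "(u, v)"] by simp
  qed (simp add: sap_lift_def)
  have cuts: "1 \<le> (\<Sum>a\<in>delta_in ?A U. ?x a)"
    if "U \<subset> sap_vertices V Tf p \<and> Inl tb \<notin> U \<and> U \<inter> sap_terminals V Tf p \<noteq> {}" for U
    using that by (intro sum_delta_in_sap_lift_ge_1[OF inst \<open>ta \<in> Tf\<close> z cut]) auto
  show ?thesis
    unfolding prize_rcut_lp_region_def mem_Collect_eq case_prod_conv
  proof (intro conjI allI impI ballI)
    show "y {u, v} = ?x (Inl u, Inl v) + ?x (Inl v, Inl u)" if "{u, v} \<in> E" for u v
      using y(1)[OF that] edge by simp
    show "?x a = 0" if "a \<notin> ?A" for a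
      using that by (simp add: sap_lift_def)
  qed (use bounded cuts y(2,3) in auto)
qed

lemma proj_y_prize_rcut_lp_region_subset:
  assumes inst: "rpcstp_instance V E Tf c p" and "tb \<in> V" "ta' \<in> Tf" "tb' \<in> Tf"
  shows "proj_y (prize_rcut_lp_region V E Tf p ta tb) \<subseteq> proj_y (prize_rcut_lp_region V E Tf p ta' tb')"
proof
  fix y assume "y \<in> proj_y (prize_rcut_lp_region V E Tf p ta tb)"
  then obtain x where xy: "(x, y) \<in> prize_rcut_lp_region V E Tf p ta tb"
    unfolding proj_y_def by force
  let ?A = "sap_arcs V E Tf p ta"
  have x: "\<forall>a\<in>?A. 0 \<le> x a \<and> x a \<le> 1" "\<forall>a. a \<notin> ?A \<longrightarrow> x a = 0"
    and y: "\<forall>u v. {u, v} \<in> E \<longrightarrow> y {u, v} = x (Inl u, Inl v) + x (Inl v, Inl u)"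
      "\<forall>e\<in>E. 0 \<le> y e \<and> y e \<le> 1" "\<forall>e. e \<notin> E \<longrightarrow> y e = 0"
    using xy unfolding prize_rcut_lp_region_def by auto
  have "finite V" "Tf \<subseteq> V"
    using inst unfolding rpcstp_instance_def by auto
  define z where "z = (\<lambda>(u, v). x (Inl u, Inl v))"
  have "0 \<le> z q" for q
    using x by (cases "(Inl (fst q), Inl (snd q)) \<in> ?A") (auto simp: z_def case_prod_beta)
  then obtain z' where z': "\<And>q. 0 \<le> z' q" "\<And>u v. z' (u, v) + z' (v, u) = z (u, v) + z (v, u)"
    "\<And>W. W \<subseteq> V \<Longrightarrow> tb' \<notin> W \<Longrightarrow> W \<inter> Tf \<noteq> {} \<Longrightarrow> 1 \<le> cut_in V z' W"
    using reroot_cut_condition[OF \<open>finite V\<close> _ \<open>tb \<in> V\<close> \<open>tb' \<in> Tf\<close> \<open>Tf \<subseteq> V\<close>]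
      prize_rcut_lp_region_edge_cut[OF inst \<open>tb \<in> V\<close> xy] unfolding z_def by blast
  have "z' (u, v) = 0" if "{u, v} \<notin> E" for u v
  proof -
    have "{v, u} \<notin> E"
      using that by (simp add: insert_commute)
    then have "z' (u, v) + z' (v, u) = 0"
      using z'(2) x(2) that by (simp add: z_def)
    then show ?thesis
      using z'(1)[of "(u, v)"] z'(1)[of "(v, u)"] by linarith
  qed
  moreover have "y {u, v} = z' (u, v) + z' (v, u)" if "{u, v} \<in> E" for u v
    using y(1) z'(2) that by (simp add: z_def)
  ultimately have "(sap_lift V E Tf p ta' z', y) \<in> prize_rcut_lp_region V E Tf p ta' tb'"
    using sap_lift_in_prize_rcut_lp_region[OF inst \<open>ta' \<in> Tf\<close> z'(1) _ z'(3)] y(2,3) by blast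
  then show "y \<in> proj_y (prize_rcut_lp_region V E Tf p ta' tb')"
    unfolding proj_y_def by force
qed

theorem proposition7:
  fixes V :: "'v set" and E :: "'v set set" and Tf :: "'v set"
    and c :: "'v set \<Rightarrow> rat" and p :: "'v \<Rightarrow> rat"
    and tp tq tp' tq' :: 'v
  assumes "rpcstp_instance V E Tf c p"
    and "tp \<in> Tf" and "tq \<in> Tf" and "tp' \<in> Tf" and "tq' \<in> Tf"
  shows "proj_y (prize_rcut_lp_region V E Tf p tp tq)
         = proj_y (prize_rcut_lp_region V E Tf p tp' tq')"
proof -
  have "Tf \<subseteq> V"
    using assms(1) unfolding rpcstp_instance_def by blast
  then have "tq \<in> V" "tq' \<in> V"
    using assms(3,5) by auto
  show ?thesis
    by (intro subset_antisym proj_y_prize_rcut_lp_region_subset[OF assms(1)])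
      (fact \<open>tq \<in> V\<close> \<open>tq' \<in> V\<close> assms(2-5))+
qed

end
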